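(* Let $X_1,\dots,X_n$ be independent real-valued integrable random variables and define constants $\lambda_0=0$, $\lambda_k=\mathbb E\sqrt{X_k^2+\lambda_{k-1}^2}$ for $k=1,\dots,n$. Then $$\lambda_n\le\mathbb E\Big(\sum_{k=1}^nX_k^2\Big)^{1/2}\le2\lambda_n .$$ *)

theory Defs
  imports "HOL-Probability.Probability"
begin

fun lam :: "'a measure \<Rightarrow> (nat \<Rightarrow> 'a \<Rightarrow> real) \<Rightarrow> nat \<Rightarrow> real" where
  "lam M X 0 = 0"
| "lam M X (Suc k) = (\<integral>\<omega>. sqrt ((X (Suc k) \<omega>)\<^sup>2 + (lam M X k)\<^sup>2) \<partial>M)"

end

theory Submission
  imports Defs
begin

text \<open>Write \<open>Y\<^sub>m = sqrt (X\<^sub>1\<^sup>2 + \<dots> + X\<^sub>m\<^sup>2)\<close>, so that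
  \<open>Y\<^sub>m\<^sub>+\<^sub>1 = sqrt (X\<^sub>m\<^sub>+\<^sub>1\<^sup>2 + Y\<^sub>m\<^sup>2)\<close>. Both bounds follow by induction on \<open>m\<close>
  from two properties of \<open>t \<mapsto> sqrt (x\<^sup>2 + t\<^sup>2)\<close>. It is convex, and \<open>X\<^sub>m\<^sub>+\<^sub>1\<close> is
  independent of \<open>Y\<^sub>m\<close>, so Jensen's inequality in the second argument gives
  \<open>E Y\<^sub>m\<^sub>+\<^sub>1 \<ge> E sqrt (X\<^sub>m\<^sub>+\<^sub>1\<^sup>2 + (E Y\<^sub>m)\<^sup>2) \<ge> \<lambda>\<^sub>m\<^sub>+\<^sub>1\<close>. It is 1-Lipschitz and
  nondecreasing for \<open>t \<ge> 0\<close>, which propagates the invariant \<open>E (Y\<^sub>m - \<lambda>\<^sub>m)\<^sup>+ \<le> \<lambda>\<^sub>m\<close>;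
  hence \<open>E Y\<^sub>n \<le> \<lambda>\<^sub>n + E (Y\<^sub>n - \<lambda>\<^sub>n)\<^sup>+ \<le> 2 \<lambda>\<^sub>n\<close>. The upper bound does not need
  independence.\<close>

lemma sqrt_sum_squares_le_pos_part:
  fixes x t l :: real
  assumes "0 \<le> t" "0 \<le> l"
  shows "sqrt (x\<^sup>2 + t\<^sup>2) \<le> sqrt (x\<^sup>2 + l\<^sup>2) + max 0 (t - l)"
proof (cases "t \<le> l")
  case True
  then have "t\<^sup>2 \<le> l\<^sup>2" using assms by (simp add: power_mono)
  with True show ?thesis by simp
next
  case False
  have "sqrt (x\<^sup>2 + t\<^sup>2) \<le> sqrt (x\<^sup>2 + l\<^sup>2) + sqrt (0\<^sup>2 + (t - l)\<^sup>2)"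
    using real_sqrt_sum_squares_triangle_ineq[of x 0 l "t - l"] by simp
  with False show ?thesis by simp
qed

lemma sqrt_sum_squares_tangent_le:
  fixes x t m :: real
  shows "sqrt (x\<^sup>2 + m\<^sup>2) + m / sqrt (x\<^sup>2 + m\<^sup>2) * (t - m) \<le> sqrt (x\<^sup>2 + t\<^sup>2)"
proof (cases "x\<^sup>2 + m\<^sup>2 = 0")
  case True
  then show ?thesis by simp
next
  case False
  define s where "s = sqrt (x\<^sup>2 + m\<^sup>2)"
  have s_pos: "0 < s"
    using False unfolding s_def by (simp add: order_le_neq_trans)
  have s_square: "s\<^sup>2 = x\<^sup>2 + m\<^sup>2"
    unfolding s_def by simp
  have "(x\<^sup>2 + m * t)\<^sup>2 \<le> (x\<^sup>2 + m\<^sup>2) * (x\<^sup>2 + t\<^sup>2)"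
    using zero_le_power2[of "x * (m - t)"] by (simp add: power2_eq_square algebra_simps)
  then have "x\<^sup>2 + m * t \<le> s * sqrt (x\<^sup>2 + t\<^sup>2)"
    unfolding s_def by (metis real_le_rsqrt real_sqrt_mult)
  moreover have "x\<^sup>2 + m * t = s * (s + m / s * (t - m))"
    using s_pos s_square by (simp add: field_simps power2_eq_square)
  ultimately show ?thesis
    using s_pos unfolding s_def[symmetric] by (simp add: mult_le_cancel_left_pos)
qed

lemma sqrt_sum_squares_atLeastAtMost_Suc:
  fixes a :: "nat \<Rightarrow> real"
  shows "sqrt (\<Sum>k=1..Suc m. (a k)\<^sup>2) = sqrt ((a (Suc m))\<^sup>2 + (sqrt (\<Sum>k=1..m. (a k)\<^sup>2))\<^sup>2)"
  by (simp add: sum_nonneg add.commute)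

lemma lam_nonneg: "0 \<le> lam M X m"
  by (cases m) (auto intro!: integral_nonneg_AE)

lemma integrable_sqrt_sum_squares:
  fixes f g :: "'a \<Rightarrow> real"
  assumes "integrable M f" "integrable M g"
  shows "integrable M (\<lambda>x. sqrt ((f x)\<^sup>2 + (g x)\<^sup>2))"
proof (rule Bochner_Integration.integrable_bound[where f="\<lambda>x. \<bar>f x\<bar> + \<bar>g x\<bar>"])
  have [measurable]: "f \<in> borel_measurable M" "g \<in> borel_measurable M"
    using assms by (simp_all add: borel_measurable_integrable)
  show "(\<lambda>x. sqrt ((f x)\<^sup>2 + (g x)\<^sup>2)) \<in> borel_measurable M"
    by measurable
qed (use assms sqrt_sum_squares_le_sum_abs in auto)

lemma integrable_sqrt_sum_squares_family:
  fixes f :: "'i \<Rightarrow> 'a \<Rightarrow> real"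
  assumes "\<And>i. i \<in> I \<Longrightarrow> integrable M (f i)"
  shows "integrable M (\<lambda>x. sqrt (\<Sum>i\<in>I. (f i x)\<^sup>2))"
proof (rule Bochner_Integration.integrable_bound[where f="\<lambda>x. \<Sum>i\<in>I. \<bar>f i x\<bar>"])
  have [measurable]: "i \<in> I \<Longrightarrow> f i \<in> borel_measurable M" for i
    using assms by (simp add: borel_measurable_integrable)
  show "(\<lambda>x. sqrt (\<Sum>i\<in>I. (f i x)\<^sup>2)) \<in> borel_measurable M"
    by measurable
  show "AE x in M. norm (sqrt (\<Sum>i\<in>I. (f i x)\<^sup>2)) \<le> norm (\<Sum>i\<in>I. \<bar>f i x\<bar>)"
    by (intro AE_I2) (simp add: sum_nonneg L2_set_le_sum_abs[unfolded L2_set_def])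
qed (use assms in auto)

context prob_space
begin

lemma indep_var_sqrt_sum_squares:
  assumes "indep_vars (\<lambda>_. borel) X I" "i \<in> I" "J \<subseteq> I" "i \<notin> J"
  shows "indep_var borel (X i) borel (\<lambda>\<omega>. sqrt (\<Sum>j\<in>J. (X j \<omega>)\<^sup>2))"
proof -
  have "indep_var (PiM {i} (\<lambda>_. borel)) (\<lambda>\<omega>. restrict (\<lambda>j. X j \<omega>) {i})
      (PiM J (\<lambda>_. borel)) (\<lambda>\<omega>. restrict (\<lambda>j. X j \<omega>) J)"
    using assms by (intro indep_var_restrict) auto
  then have "indep_var borel ((\<lambda>f. f i) \<circ> (\<lambda>\<omega>. restrict (\<lambda>j. X j \<omega>) {i}))
      borel ((\<lambda>f. sqrt (\<Sum>j\<in>J. (f j)\<^sup>2)) \<circ> (\<lambda>\<omega>. restrict (\<lambda>j. X j \<omega>) J))"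
    by (rule indep_var_compose) measurable
  then show ?thesis
    by (simp add: comp_def)
qed

lemma integral_sqrt_square_add_expectation_le:
  fixes U V :: "'a \<Rightarrow> real"
  assumes indep: "indep_var borel U borel V"
    and U: "integrable M U" and V: "integrable M V"
  shows "(\<integral>\<omega>. sqrt ((U \<omega>)\<^sup>2 + (expectation V)\<^sup>2) \<partial>M) \<le> (\<integral>\<omega>. sqrt ((U \<omega>)\<^sup>2 + (V \<omega>)\<^sup>2) \<partial>M)"
proof -
  define \<mu> where "\<mu> = expectation V"
  define c where "c = (\<lambda>\<omega>. \<mu> / sqrt ((U \<omega>)\<^sup>2 + \<mu>\<^sup>2))"
  have [measurable]: "U \<in> borel_measurable M"
    using U by (rule borel_measurable_integrable)
  have quotient_bound: "\<bar>a / b\<bar> \<le> 1" if "\<bar>a\<bar> \<le> b" for a b :: real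
    using that by (cases "b = 0") (auto simp: divide_le_eq_1)
  have \<mu>_bound: "\<bar>\<mu>\<bar> \<le> sqrt ((U \<omega>)\<^sup>2 + \<mu>\<^sup>2)" for \<omega>
    using real_sqrt_le_mono[of "\<mu>\<^sup>2" "(U \<omega>)\<^sup>2 + \<mu>\<^sup>2"] by simp
  have c_bound: "\<bar>c \<omega>\<bar> \<le> 1" for \<omega>
    unfolding c_def by (rule quotient_bound[OF \<mu>_bound])
  have c: "integrable M c"
  proof (rule Bochner_Integration.integrable_bound[where f="\<lambda>_. 1::real"])
    show "c \<in> borel_measurable M"
      unfolding c_def by measurable
  qed (use c_bound in simp_all)
  \<comment> \<open>\<open>c\<close> is the slope of the tangent at \<open>\<mu>\<close>; it depends on \<open>U\<close> only, so by independence
    the linear correction term has mean zero.\<close>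
  have indep_correction: "indep_var borel c borel (\<lambda>\<omega>. V \<omega> - \<mu>)"
    using indep_var_compose[OF indep, of "\<lambda>u. \<mu> / sqrt (u\<^sup>2 + \<mu>\<^sup>2)" borel "\<lambda>v. v - \<mu>" borel]
    by (simp add: comp_def c_def)
  have V_centered: "integrable M (\<lambda>\<omega>. V \<omega> - \<mu>)" "expectation (\<lambda>\<omega>. V \<omega> - \<mu>) = 0"
    using V by (simp_all add: \<mu>_def prob_space)
  have correction: "integrable M (\<lambda>\<omega>. c \<omega> * (V \<omega> - \<mu>))"
      "(\<integral>\<omega>. c \<omega> * (V \<omega> - \<mu>) \<partial>M) = 0"
    using indep_var_integrable[OF indep_correction c V_centered(1)]
      indep_var_lebesgue_integral[OF indep_correction c V_centered(1)] V_centered(2)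
    by simp_all
  have sqrt_\<mu>: "integrable M (\<lambda>\<omega>. sqrt ((U \<omega>)\<^sup>2 + \<mu>\<^sup>2))"
    using U by (intro integrable_sqrt_sum_squares) auto
  have "(\<integral>\<omega>. sqrt ((U \<omega>)\<^sup>2 + \<mu>\<^sup>2) \<partial>M)
      = (\<integral>\<omega>. sqrt ((U \<omega>)\<^sup>2 + \<mu>\<^sup>2) + c \<omega> * (V \<omega> - \<mu>) \<partial>M)"
    using sqrt_\<mu> correction by simp
  also have "\<dots> \<le> (\<integral>\<omega>. sqrt ((U \<omega>)\<^sup>2 + (V \<omega>)\<^sup>2) \<partial>M)"
  proof (rule integral_mono)
    show "integrable M (\<lambda>\<omega>. sqrt ((U \<omega>)\<^sup>2 + \<mu>\<^sup>2) + c \<omega> * (V \<omega> - \<mu>))"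
      using sqrt_\<mu> correction by simp
    show "integrable M (\<lambda>\<omega>. sqrt ((U \<omega>)\<^sup>2 + (V \<omega>)\<^sup>2))"
      using U V by (rule integrable_sqrt_sum_squares)
    show "sqrt ((U \<omega>)\<^sup>2 + \<mu>\<^sup>2) + c \<omega> * (V \<omega> - \<mu>) \<le> sqrt ((U \<omega>)\<^sup>2 + (V \<omega>)\<^sup>2)" for \<omega>
      unfolding c_def by (rule sqrt_sum_squares_tangent_le)
  qed
  finally show ?thesis
    unfolding \<mu>_def .
qed

lemma integral_pos_part_sqrt_sum_squares_le:
  fixes U V :: "'a \<Rightarrow> real"
  assumes U: "integrable M U" and V: "integrable M V"
    and V_nonneg: "\<And>\<omega>. 0 \<le> V \<omega>" and l_nonneg: "0 \<le> l"
    and excess: "(\<integral>\<omega>. max 0 (V \<omega> - l) \<partial>M) \<le> l"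
  defines "L \<equiv> \<integral>\<omega>. sqrt ((U \<omega>)\<^sup>2 + l\<^sup>2) \<partial>M"
  shows "(\<integral>\<omega>. max 0 (sqrt ((U \<omega>)\<^sup>2 + (V \<omega>)\<^sup>2) - L) \<partial>M) \<le> L"
proof -
  have sqrt_l: "integrable M (\<lambda>\<omega>. sqrt ((U \<omega>)\<^sup>2 + l\<^sup>2))"
    using U by (intro integrable_sqrt_sum_squares) auto
  have sqrt_V: "integrable M (\<lambda>\<omega>. sqrt ((U \<omega>)\<^sup>2 + (V \<omega>)\<^sup>2))"
    using U V by (rule integrable_sqrt_sum_squares)
  have V_excess: "integrable M (\<lambda>\<omega>. max 0 (V \<omega> - l))"
    using V by auto
  have "l = (\<integral>\<omega>. l \<partial>M)"
    by (simp add: prob_space)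
  also have "\<dots> \<le> L"
    unfolding L_def using sqrt_l by (intro integral_mono) auto
  finally have "l \<le> L" .
  then have pointwise: "max 0 (sqrt ((U \<omega>)\<^sup>2 + (V \<omega>)\<^sup>2) - L)
      \<le> sqrt ((U \<omega>)\<^sup>2 + l\<^sup>2) - l + max 0 (V \<omega> - l)" for \<omega>
    using sqrt_sum_squares_le_pos_part[OF V_nonneg[of \<omega>] l_nonneg, of "U \<omega>"] by auto
  have "(\<integral>\<omega>. max 0 (sqrt ((U \<omega>)\<^sup>2 + (V \<omega>)\<^sup>2) - L) \<partial>M)
      \<le> (\<integral>\<omega>. sqrt ((U \<omega>)\<^sup>2 + l\<^sup>2) - l + max 0 (V \<omega> - l) \<partial>M)"
    using sqrt_V sqrt_l V_excess pointwise by (intro integral_mono) auto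
  also have "\<dots> = L - l + (\<integral>\<omega>. max 0 (V \<omega> - l) \<partial>M)"
    using sqrt_l V_excess by (simp add: L_def prob_space)
  also have "\<dots> \<le> L"
    using excess by simp
  finally show ?thesis .
qed

lemma integral_le_add_integral_pos_part:
  fixes Y :: "'a \<Rightarrow> real"
  assumes "integrable M Y"
  shows "(\<integral>\<omega>. Y \<omega> \<partial>M) \<le> c + (\<integral>\<omega>. max 0 (Y \<omega> - c) \<partial>M)"
proof -
  have "(\<integral>\<omega>. Y \<omega> \<partial>M) \<le> (\<integral>\<omega>. c + max 0 (Y \<omega> - c) \<partial>M)"
    using assms by (intro integral_mono) auto
  also have "\<dots> = c + (\<integral>\<omega>. max 0 (Y \<omega> - c) \<partial>M)"
    using assms by (simp add: prob_space)
  finally show ?thesis .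
qed

lemma lam_le_integral_sqrt_sum_squares:
  assumes "indep_vars (\<lambda>_. borel) X {1..m}"
    and "\<And>k. k \<in> {1..m} \<Longrightarrow> integrable M (X k)"
  shows "lam M X m \<le> (\<integral>\<omega>. sqrt (\<Sum>k=1..m. (X k \<omega>)\<^sup>2) \<partial>M)"
  using assms
proof (induction m)
  case (Suc m)
  define Y where "Y = (\<lambda>\<omega>. sqrt (\<Sum>k=1..m. (X k \<omega>)\<^sup>2))"
  have X: "integrable M (X (Suc m))" and Y: "integrable M Y"
    unfolding Y_def using Suc.prems(2) by (auto intro: integrable_sqrt_sum_squares_family)
  have "indep_vars (\<lambda>_. borel) X {1..m}"
    using Suc.prems(1) by (rule indep_vars_subset) auto
  then have "lam M X m \<le> expectation Y"
    unfolding Y_def using Suc.IH Suc.prems(2) by simp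
  then have "(lam M X m)\<^sup>2 \<le> (expectation Y)\<^sup>2"
    using lam_nonneg by (intro power_mono) auto
  then have "lam M X (Suc m) \<le> (\<integral>\<omega>. sqrt ((X (Suc m) \<omega>)\<^sup>2 + (expectation Y)\<^sup>2) \<partial>M)"
    using X by (auto intro!: integral_mono integrable_sqrt_sum_squares)
  also have "\<dots> \<le> (\<integral>\<omega>. sqrt ((X (Suc m) \<omega>)\<^sup>2 + (Y \<omega>)\<^sup>2) \<partial>M)"
    using Suc.prems(1) X Y unfolding Y_def
    by (intro integral_sqrt_square_add_expectation_le indep_var_sqrt_sum_squares) auto
  also have "\<dots> = (\<integral>\<omega>. sqrt (\<Sum>k=1..Suc m. (X k \<omega>)\<^sup>2) \<partial>M)"
    unfolding Y_def sqrt_sum_squares_atLeastAtMost_Suc ..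
  finally show ?case .
qed simp

lemma integral_pos_part_sqrt_sum_squares_minus_lam_le:
  assumes "\<And>k. k \<in> {1..m} \<Longrightarrow> integrable M (X k)"
  shows "(\<integral>\<omega>. max 0 (sqrt (\<Sum>k=1..m. (X k \<omega>)\<^sup>2) - lam M X m) \<partial>M) \<le> lam M X m"
  using assms
proof (induction m)
  case (Suc m)
  have "(\<integral>\<omega>. max 0 (sqrt ((X (Suc m) \<omega>)\<^sup>2 + (sqrt (\<Sum>k=1..m. (X k \<omega>)\<^sup>2))\<^sup>2)
      - lam M X (Suc m)) \<partial>M) \<le> lam M X (Suc m)"
    unfolding lam.simps using Suc
    by (intro integral_pos_part_sqrt_sum_squares_le integrable_sqrt_sum_squares_family lam_nonneg)
       (auto simp: sum_nonneg)
  then show ?case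
    by (simp only: sqrt_sum_squares_atLeastAtMost_Suc)
qed simp

end

theorem corollary6p2:
  fixes M :: "'a measure" and X :: "nat \<Rightarrow> 'a \<Rightarrow> real" and n :: nat
  assumes "prob_space M"
    and "prob_space.indep_vars M (\<lambda>_. borel) X {1..n}"
    and "\<And>k. k \<in> {1..n} \<Longrightarrow> integrable M (X k)"
  shows "lam M X n \<le> (\<integral>\<omega>. sqrt (\<Sum>k=1..n. (X k \<omega>)\<^sup>2) \<partial>M)
     \<and> (\<integral>\<omega>. sqrt (\<Sum>k=1..n. (X k \<omega>)\<^sup>2) \<partial>M) \<le> 2 * lam M X n"
proof -
  interpret prob_space M
    by (fact assms(1))
  define Y where "Y = (\<lambda>\<omega>. sqrt (\<Sum>k=1..n. (X k \<omega>)\<^sup>2))"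
  have "lam M X n \<le> expectation Y"
    unfolding Y_def using assms(2,3) by (rule lam_le_integral_sqrt_sum_squares)
  moreover have "expectation Y \<le> lam M X n + (\<integral>\<omega>. max 0 (Y \<omega> - lam M X n) \<partial>M)"
    unfolding Y_def using assms(3)
    by (intro integral_le_add_integral_pos_part integrable_sqrt_sum_squares_family)
  moreover have "(\<integral>\<omega>. max 0 (Y \<omega> - lam M X n) \<partial>M) \<le> lam M X n"
    unfolding Y_def using assms(3) by (rule integral_pos_part_sqrt_sum_squares_minus_lam_le)
  ultimately show ?thesis
    unfolding Y_def by simp
qed

end
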